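(* Let $G=(V,E)$ be a graph, $v\in V$, and $F$ a set of $k$ new edges (pairs not in $E$), with $\bar G=(V,E\cup F)$. Then $$LCC_{\bar G}(v)\le \overline{LCC}(v,k):=\max_{k_1+k_2=k}\ \frac{n_v+k_2+k_1\, d_G(v)+\binom{k_1}{2}}{\binom{d_G(v)+k_1}{2}},$$ where the maximum is over nonnegative integers $k_1,k_2$ with $k_1+k_2=k$, and $n_v=LCC_G(v)\binom{d_G(v)}{2}$ is the number of edges of $G$ between neighbors of $v$.
   Context: $G=(V,E)$ is a simple undirected graph; $N_G(v)$ is the neighbor set and $d_G(v)=|N_G(v)|$ the degree of $v$; $LCC_G(v)=\frac{|\{(i,j): i,j\in N_G(v),\ (i,j)\in E\}|}{\binom{d_G(v)}{2}}$ is the local clustering coefficient. *)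

theory Defs
  imports Complex_Main
begin

definition all_pairs :: "'a set \<Rightarrow> 'a set set" where
  "all_pairs V = {{x, y} | x y. x \<in> V \<and> y \<in> V \<and> x \<noteq> y}"

definition simple_graph :: "'a set \<Rightarrow> 'a set set \<Rightarrow> bool" where
  "simple_graph V E \<longleftrightarrow> finite V \<and> E \<subseteq> all_pairs V"

definition neighbors :: "'a set set \<Rightarrow> 'a \<Rightarrow> 'a set" where
  "neighbors E v = {u. {u, v} \<in> E}"

definition degree :: "'a set set \<Rightarrow> 'a \<Rightarrow> nat" where
  "degree E v = card (neighbors E v)"

definition nbr_edges :: "'a set set \<Rightarrow> 'a \<Rightarrow> nat" where
  "nbr_edges E v = card {e \<in> E. e \<subseteq> neighbors E v}"

text \<open>Local clustering coefficient; by Isabelle's convention x/0 = 0 it is 0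
  when the degree is below 2.\<close>
definition LCC :: "'a set set \<Rightarrow> 'a \<Rightarrow> real" where
  "LCC E v = real (nbr_edges E v) / real (degree E v choose 2)"

definition LCC_bar :: "'a set set \<Rightarrow> 'a \<Rightarrow> nat \<Rightarrow> real" where
  "LCC_bar E v k =
     (let d = degree E v; n_v = LCC E v * real (d choose 2) in
      Max ((\<lambda>k1. let k2 = k - k1 in
               (n_v + real k2 + real k1 * real d + real (k1 choose 2))
               / real ((d + k1) choose 2)) ` {0..k}))"

end

theory Submission
  imports Defs
begin

text \<open>After adding F, the neighbourhood of v is N \<union> K with N = N_G(v) and K its set of
  k1 new neighbours. An edge of E \<union> F inside N \<union> K either lies inside N, where it is
  an old edge (n_v of them) or a new edge that is not one of the k1 new spokes at v
  (at most k - k1 of them), or it is one of the k1 d + (k1 choose 2) pairs of N \<union> K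
  meeting K. Dividing by (d + k1 choose 2) gives the term of LCC-bar(v, k) at k1.\<close>

lemma choose_two_add: "(d + m choose 2) = (d choose 2) + m * d + (m choose 2)"
proof (induction m)
  case 0
  then show ?case by simp
next
  case (Suc m)
  have "(Suc (d + m) choose 2) = (d + m choose 2) + (d + m)"
    and "(Suc m choose 2) = (m choose 2) + m"
    by (simp_all add: numeral_2_eq_2)
  with Suc show ?case by simp
qed

lemma card_two_subsets_Un_diff:
  assumes "finite S" "finite T" "S \<inter> T = {}"
  shows "card ({B. B \<subseteq> S \<union> T \<and> card B = 2} - {B. B \<subseteq> S \<and> card B = 2})
           = card T * card S + (card T choose 2)"
proof -
  have "{B. B \<subseteq> S \<and> card B = 2} \<subseteq> {B. B \<subseteq> S \<union> T \<and> card B = 2}"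
    by blast
  then have "card ({B. B \<subseteq> S \<union> T \<and> card B = 2} - {B. B \<subseteq> S \<and> card B = 2})
          = (card (S \<union> T) choose 2) - (card S choose 2)"
    using assms(1,2) by (simp add: card_Diff_subset n_subsets)
  also have "\<dots> = card T * card S + (card T choose 2)"
    using assms by (simp add: card_Un_disjoint choose_two_add)
  finally show ?thesis .
qed

lemma card_edges_within_le:
  assumes "\<forall>e\<in>G. card e = 2" "finite S"
  shows "card {e \<in> G. e \<subseteq> S} \<le> card S choose 2"
proof -
  have "{e \<in> G. e \<subseteq> S} \<subseteq> {B. B \<subseteq> S \<and> card B = 2}"
    using assms(1) by blast
  then have "card {e \<in> G. e \<subseteq> S} \<le> card {B. B \<subseteq> S \<and> card B = 2}"
    using assms(2) by (intro card_mono) simp_all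
  with assms(2) show ?thesis by (simp add: n_subsets)
qed

lemma card_edges_within_Un_le:
  assumes "\<forall>e\<in>G. card e = 2" "finite S" "finite T" "S \<inter> T = {}"
  shows "card {e \<in> G. e \<subseteq> S \<union> T}
           \<le> card {e \<in> G. e \<subseteq> S} + card T * card S + (card T choose 2)"
proof -
  let ?new = "{B. B \<subseteq> S \<union> T \<and> card B = 2} - {B. B \<subseteq> S \<and> card B = 2}"
  have "{e \<in> G. e \<subseteq> S \<union> T} \<subseteq> {e \<in> G. e \<subseteq> S} \<union> ?new"
    using assms(1) by blast
  moreover have "{e \<in> G. e \<subseteq> S} \<union> ?new \<subseteq> Pow (S \<union> T)"
    by blast
  then have "finite ({e \<in> G. e \<subseteq> S} \<union> ?new)"
    using assms(2,3) by (simp add: finite_subset)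
  ultimately have "card {e \<in> G. e \<subseteq> S \<union> T} \<le> card ({e \<in> G. e \<subseteq> S} \<union> ?new)"
    by (simp add: card_mono)
  also have "\<dots> \<le> card {e \<in> G. e \<subseteq> S} + card ?new"
    by (rule card_Un_le)
  finally show ?thesis
    using card_two_subsets_Un_diff[OF assms(2-4)] by simp
qed

lemma card_edges_within_add_degree_le:
  assumes "finite F" "v \<notin> S"
  shows "card {e \<in> F. e \<subseteq> S} + degree F v \<le> card F"
proof -
  let ?spokes = "(\<lambda>u. {u, v}) ` neighbors F v"
  have "card ?spokes = degree F v"
    unfolding degree_def by (rule card_image) (auto simp: inj_on_def doubleton_eq_iff)
  moreover have "{e \<in> F. e \<subseteq> S} \<inter> ?spokes = {}"
    using assms(2) by auto
  moreover have sub: "{e \<in> F. e \<subseteq> S} \<union> ?spokes \<subseteq> F"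
    unfolding neighbors_def by auto
  moreover have "finite ?spokes"
    using sub assms(1) by (meson finite_subset le_sup_iff)
  ultimately show ?thesis
    using assms(1) card_mono[OF assms(1) sub] by (simp add: card_Un_disjoint)
qed

lemma all_pairs_card_two: "e \<in> all_pairs V \<Longrightarrow> card e = 2"
  unfolding all_pairs_def by auto

lemma finite_all_pairs: "finite V \<Longrightarrow> finite (all_pairs V)"
  unfolding all_pairs_def by (rule rev_finite_subset[of "Pow V"]) auto

lemma not_mem_neighbors: "E \<subseteq> all_pairs V \<Longrightarrow> v \<notin> neighbors E v"
  unfolding neighbors_def all_pairs_def by auto

lemma finite_neighbors:
  "finite V \<Longrightarrow> E \<subseteq> all_pairs V \<Longrightarrow> finite (neighbors E v)"
  unfolding neighbors_def all_pairs_def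
  by (rule rev_finite_subset[of V]) (auto simp: doubleton_eq_iff)

lemma neighbors_Un: "neighbors (E \<union> F) v = neighbors E v \<union> neighbors F v"
  unfolding neighbors_def by auto

lemma neighbors_disjoint:
  "F \<inter> E = {} \<Longrightarrow> neighbors E v \<inter> neighbors F v = {}"
  unfolding neighbors_def by auto

lemma nbr_edges_le_degree_choose_two:
  "simple_graph V E \<Longrightarrow> nbr_edges E v \<le> degree E v choose 2"
  unfolding simple_graph_def nbr_edges_def degree_def
  by (intro card_edges_within_le finite_neighbors) (auto intro: all_pairs_card_two)

lemma LCC_mult_choose_two:
  assumes "simple_graph V E"
  shows "LCC E v * real (degree E v choose 2) = real (nbr_edges E v)"
  using nbr_edges_le_degree_choose_two[OF assms, of v] unfolding LCC_def
  by (cases "degree E v choose 2 = 0") auto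

lemma LCC_bar_ge:
  assumes "simple_graph V E" "k\<^sub>1 \<le> k"
  shows "real (nbr_edges E v + (k - k\<^sub>1) + k\<^sub>1 * degree E v + (k\<^sub>1 choose 2))
           / real (degree E v + k\<^sub>1 choose 2) \<le> LCC_bar E v k"
  unfolding LCC_bar_def Let_def LCC_mult_choose_two[OF assms(1)]
  using assms(2) by (intro Max_ge) (auto simp: algebra_simps)

lemma degree_Un:
  assumes "simple_graph V E" "F \<subseteq> all_pairs V" "F \<inter> E = {}"
  shows "degree (E \<union> F) v = degree E v + degree F v"
proof -
  have "finite V" "E \<subseteq> all_pairs V"
    using assms(1) unfolding simple_graph_def by auto
  then show ?thesis
    unfolding degree_def neighbors_Un
    using finite_neighbors[of V] assms(2) neighbors_disjoint[OF assms(3)]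
    by (simp add: card_Un_disjoint)
qed

lemma nbr_edges_Un_le:
  assumes "simple_graph V E" "F \<subseteq> all_pairs V" "F \<inter> E = {}"
  shows "nbr_edges (E \<union> F) v
           \<le> nbr_edges E v + (card F - degree F v) + degree F v * degree E v
             + (degree F v choose 2)"
proof -
  have fin: "finite V" and E: "E \<subseteq> all_pairs V"
    using assms(1) unfolding simple_graph_def by auto
  let ?N = "neighbors E v"
  have "\<forall>e\<in>E \<union> F. card e = 2"
    using E assms(2) all_pairs_card_two by blast
  then have within_Un: "nbr_edges (E \<union> F) v
      \<le> card {e \<in> E \<union> F. e \<subseteq> ?N} + degree F v * degree E v + (degree F v choose 2)"
    unfolding nbr_edges_def degree_def neighbors_Un
    using finite_neighbors[OF fin E] finite_neighbors[OF fin assms(2)]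
      neighbors_disjoint[OF assms(3)]
    by (rule card_edges_within_Un_le)
  have "{e \<in> E \<union> F. e \<subseteq> ?N} = {e \<in> E. e \<subseteq> ?N} \<union> {e \<in> F. e \<subseteq> ?N}"
    by blast
  then have old_and_new: "card {e \<in> E \<union> F. e \<subseteq> ?N} \<le> nbr_edges E v + card {e \<in> F. e \<subseteq> ?N}"
    unfolding nbr_edges_def by (simp only: card_Un_le)
  have "finite F"
    using fin assms(2) finite_all_pairs finite_subset by blast
  then have "card {e \<in> F. e \<subseteq> ?N} + degree F v \<le> card F"
    using not_mem_neighbors[OF E] by (rule card_edges_within_add_degree_le)
  with within_Un old_and_new show ?thesis by linarith
qed

theorem theorem3:
  fixes V :: "'a set" and E F :: "'a set set" and v :: 'a and k :: nat
  assumes "simple_graph V E"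
    and "v \<in> V"
    and "F \<subseteq> all_pairs V"
    and "F \<inter> E = {}"
    and "card F = k"
  shows "LCC (E \<union> F) v \<le> LCC_bar E v k"
proof -
  define k\<^sub>1 where "k\<^sub>1 = degree F v"
  have "finite F"
    using assms(1,3) unfolding simple_graph_def by (metis finite_all_pairs finite_subset)
  then have "k\<^sub>1 \<le> k"
    using card_edges_within_add_degree_le[of F v "{}"] assms(5) unfolding k\<^sub>1_def by simp
  have "LCC (E \<union> F) v = real (nbr_edges (E \<union> F) v) / real (degree E v + k\<^sub>1 choose 2)"
    unfolding LCC_def k\<^sub>1_def degree_Un[OF assms(1,3,4)] ..
  also have "\<dots> \<le> real (nbr_edges E v + (k - k\<^sub>1) + k\<^sub>1 * degree E v + (k\<^sub>1 choose 2))
                   / real (degree E v + k\<^sub>1 choose 2)"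
    using nbr_edges_Un_le[OF assms(1,3,4), of v] assms(5)
    unfolding k\<^sub>1_def by (intro divide_right_mono of_nat_mono) simp_all
  also have "\<dots> \<le> LCC_bar E v k"
    using LCC_bar_ge[OF assms(1) \<open>k\<^sub>1 \<le> k\<close>] .
  finally show ?thesis .
qed

end
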